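(* Let $n\ge 5$ and let $\sigma$ be a maximal simplex of $\Delta_n$. If $|N(w)\cap\sigma|\ge 2$ for all $w\in\sigma$, then there exists $\tilde v\in\sigma$ with $|N(\tilde v)\cap\sigma|\ge 3$.
   Context: $\mathbb{I}_n$ is the $n$-dimensional hypercube graph on vertex set $\{0,1\}^n$ (adjacent iff differing in exactly one coordinate), with Hamming distance $d(v,w)=\#\{i: v(i)\ne w(i)\}$. $\Delta_n=\mathcal{VR}(\mathbb{I}_n;3)$ is the simplicial complex whose simplices are the subsets $\sigma\subseteq\{0,1\}^n$ with $d(x,y)\le 3$ for all $x,y\in\sigma$. $N(v)$ denotes the set of the $n$ vertices adjacent to $v$ in $\mathbb{I}_n$. *)

theory Defs
  imports Main
begin

definition cube_vertices :: "nat \<Rightarrow> bool list set" where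
  "cube_vertices n = {v. length v = n}"

text \<open>Hamming distance (on lists of equal length).\<close>
definition hamming :: "bool list \<Rightarrow> bool list \<Rightarrow> nat" where
  "hamming v w = card {i. i < length v \<and> v ! i \<noteq> w ! i}"

text \<open>Simplices of Delta_n = VR(I_n; 3): nonempty sets of vertices of pairwise distance at most 3.\<close>
definition is_simplex :: "nat \<Rightarrow> bool list set \<Rightarrow> bool" where
  "is_simplex n \<sigma> \<longleftrightarrow> \<sigma> \<noteq> {} \<and> \<sigma> \<subseteq> cube_vertices n \<and>
      (\<forall>x\<in>\<sigma>. \<forall>y\<in>\<sigma>. hamming x y \<le> 3)"

definition is_maximal_simplex :: "nat \<Rightarrow> bool list set \<Rightarrow> bool" where
  "is_maximal_simplex n \<sigma> \<longleftrightarrow> is_simplex n \<sigma> \<and>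
      (\<forall>\<tau>. is_simplex n \<tau> \<and> \<sigma> \<subseteq> \<tau> \<longrightarrow> \<tau> = \<sigma>)"

definition nbhd :: "nat \<Rightarrow> bool list \<Rightarrow> bool list set" where
  "nbhd n v = {w \<in> cube_vertices n. hamming v w = 1}"

end

theory Submission
  imports Defs
begin

(*
  Recording, for each vertex, the set of coordinates where it differs from a fixed w \<in> \<sigma>
  turns \<sigma> into a family F of subsets of {..<n} that contains {}, has diameter at most 3 for
  the symmetric-difference metric and is maximal with this property; neighbours in \<sigma> become
  members of F at distance 1. Suppose every member of F had exactly two neighbours. Then {} has
  exactly two singleton neighbours {i} and {j}, and every 3-element member contains i and j.
  Since n \<ge> 3, some {k} with k \<notin> {i, j} is missing from F, and by maximality this is witnessed
  by a member {i, j, m} with m \<noteq> k; repeating with k := m gives {i, j, m'} with m' \<noteq> m.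
  Now {i, j} \<notin> F, as it would have the four neighbours {i}, {j}, {i, j, m}, {i, j, m'}, so the
  two neighbours of {i, j, m} must be {i, m} and {j, m}. But {i, m} and {j, m'} are at distance 4.
*)

lemma card_sym_diff_eq_1_iff: "card (sym_diff S T) = 1 \<longleftrightarrow> (\<exists>k. T = sym_diff S {k})"
proof
  assume "card (sym_diff S T) = 1"
  then obtain k where "sym_diff S T = {k}" by (auto simp: card_1_singleton_iff)
  then have "T = sym_diff S {k}" by blast
  then show "\<exists>k. T = sym_diff S {k}" ..
next
  assume "\<exists>k. T = sym_diff S {k}"
  then obtain k where "T = sym_diff S {k}" ..
  then have "sym_diff S T = {k}" by blast
  then show "card (sym_diff S T) = 1" by simp
qed

locale maximal_diam_3_family =
  fixes n :: nat and F :: "nat set set"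
  assumes empty_mem: "{} \<in> F"
    and mem_subset: "S \<in> F \<Longrightarrow> S \<subseteq> {..<n}"
    and card_sym_diff_le_3: "S \<in> F \<Longrightarrow> T \<in> F \<Longrightarrow> card (sym_diff S T) \<le> 3"
    and maximal: "S \<subseteq> {..<n} \<Longrightarrow> (\<And>T. T \<in> F \<Longrightarrow> card (sym_diff S T) \<le> 3) \<Longrightarrow> S \<in> F"
begin

lemma finite_mem: "S \<in> F \<Longrightarrow> finite S"
  using mem_subset finite_subset by blast

lemma finite_F: "finite F"
  using mem_subset by (meson finite_Pow_iff finite_lessThan finite_subset PowI subsetI)

lemma card_mem_le_3: "S \<in> F \<Longrightarrow> card S \<le> 3"
  using card_sym_diff_le_3 [OF _ empty_mem] by simp

end

locale two_regular_diam_3_family = maximal_diam_3_family +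
  assumes two_neighbours: "S \<in> F \<Longrightarrow> card {T \<in> F. card (sym_diff S T) = 1} = 2"
begin

lemma two_singleton_members:
  obtains i j where "i \<noteq> j" and "\<And>k. {k} \<in> F \<longleftrightarrow> k = i \<or> k = j"
proof -
  have "{T \<in> F. card T = 1} = (\<lambda>k. {k}) ` {k. {k} \<in> F}"
    by (auto simp: card_1_singleton_iff)
  then have "card ((\<lambda>k. {k}) ` {k. {k} \<in> F}) = 2"
    using two_neighbours [OF empty_mem] by simp
  then have "card {k. {k} \<in> F} = 2"
    by (simp add: card_image inj_on_def)
  then show ?thesis
    using that by (auto simp: card_2_iff set_eq_iff)
qed

end

locale two_regular_diam_3_family_with_singletons = two_regular_diam_3_family +
  fixes i j :: nat
  assumes i_neq_j: "i \<noteq> j" and singleton_mem_iff: "{k} \<in> F \<longleftrightarrow> k = i \<or> k = j"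
begin

lemma card_3_mem_contains:
  assumes "S \<in> F" and "card S = 3"
  shows "i \<in> S" and "j \<in> S"
proof -
  have "x \<in> S" if "x = i \<or> x = j" for x
  proof (rule ccontr)
    assume "x \<notin> S"
    then have "sym_diff S {x} = insert x S" by blast
    moreover have "card (insert x S) = 4"
      using \<open>x \<notin> S\<close> assms finite_mem by simp
    moreover have "{x} \<in> F" using singleton_mem_iff that by blast
    ultimately show False
      using card_sym_diff_le_3 [OF \<open>S \<in> F\<close>] by fastforce
  qed
  then show "i \<in> S" and "j \<in> S" by simp_all
qed

lemma triple_mem_avoiding:
  assumes "k < n" and "k \<noteq> i" and "k \<noteq> j"
  obtains m where "m \<noteq> i" and "m \<noteq> j" and "m \<noteq> k" and "{i, j, m} \<in> F"
proof -
  have "{k} \<notin> F" using assms singleton_mem_iff by blast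
  then obtain T where "T \<in> F" and far: "card (sym_diff {k} T) > 3"
    using maximal [of "{k}"] assms by force
  have "k \<notin> T"
  proof
    assume "k \<in> T"
    then have "sym_diff {k} T = T - {k}" by blast
    then show False
      using far card_mem_le_3 [OF \<open>T \<in> F\<close>] card_Diff1_le [of T k] by simp
  qed
  then have "sym_diff {k} T = insert k T" by blast
  then have "card T = 3"
    using far card_mem_le_3 [OF \<open>T \<in> F\<close>] finite_mem [OF \<open>T \<in> F\<close>] \<open>k \<notin> T\<close> by simp
  then obtain m where "T = {i, j, m}" "m \<noteq> i" "m \<noteq> j"
    using card_3_mem_contains [OF \<open>T \<in> F\<close>] i_neq_j by (auto simp: card_3_iff)
  then show ?thesis
    using that \<open>T \<in> F\<close> \<open>k \<notin> T\<close> by blast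
qed

lemma pair_not_mem:
  assumes "{i, j, m} \<in> F" and "{i, j, m'} \<in> F"
    and "m \<noteq> i" "m \<noteq> j" "m' \<noteq> i" "m' \<noteq> j" "m \<noteq> m'"
  shows "{i, j} \<notin> F"
proof
  assume "{i, j} \<in> F"
  have "{{i}, {j}, {i, j, m}, {i, j, m'}} \<subseteq> {T \<in> F. card (sym_diff {i, j} T) = 1}"
    (is "?four \<subseteq> ?N")
    using assms i_neq_j singleton_mem_iff by (auto simp: insert_Diff_if)
  then have "card ?four \<le> card ?N"
    using finite_F by (intro card_mono) auto
  then have "card ?four \<le> 2"
    using two_neighbours [OF \<open>{i, j} \<in> F\<close>] by simp
  moreover have "card ?four = 4"
    using assms i_neq_j by (auto simp: doubleton_eq_iff insert_eq_iff)
  ultimately show False by simp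
qed

lemma triple_mem_imp_pairs_mem:
  assumes "{i, j, m} \<in> F" and "m \<noteq> i" and "m \<noteq> j" and "{i, j} \<notin> F"
  shows "{i, m} \<in> F" and "{j, m} \<in> F"
proof -
  let ?N = "{T \<in> F. card (sym_diff {i, j, m} T) = 1}"
  have "?N \<subseteq> {{j, m}, {i, m}}"
  proof
    fix T assume "T \<in> ?N"
    then have "T \<in> F" and "\<exists>k. T = sym_diff {i, j, m} {k}"
      by (auto simp only: mem_Collect_eq card_sym_diff_eq_1_iff)
    then obtain k where T: "T = sym_diff {i, j, m} {k}" by blast
    consider "k = i" | "k = j" | "k = m" | "k \<notin> {i, j, m}" by blast
    then show "T \<in> {{j, m}, {i, m}}"
    proof cases
      case 3
      then have "T = {i, j}" using T assms i_neq_j by auto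
      with \<open>T \<in> F\<close> assms show ?thesis by simp
    next
      case 4
      then have "card T = 4" using T assms i_neq_j by (simp add: insert_absorb)
      with card_mem_le_3 [OF \<open>T \<in> F\<close>] show ?thesis by simp
    qed (use T assms i_neq_j in auto)
  qed
  moreover have "card ?N = 2" using two_neighbours [OF assms(1)] .
  moreover have "card {{j, m}, {i, m}} = 2" using assms i_neq_j by (auto simp: doubleton_eq_iff)
  ultimately have "?N = {{j, m}, {i, m}}" by (simp add: card_subset_eq)
  then show "{i, m} \<in> F" and "{j, m} \<in> F" by blast+
qed

end

context two_regular_diam_3_family
begin

theorem dimension_le_2: "n \<le> 2"
proof (rule ccontr)
  assume "\<not> n \<le> 2"
  obtain i j where "i \<noteq> j" and "\<And>k. {k} \<in> F \<longleftrightarrow> k = i \<or> k = j"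
    using two_singleton_members by blast
  then interpret two_regular_diam_3_family_with_singletons n F i j
    by unfold_locales
  have "\<exists>k < 3. k \<noteq> i \<and> k \<noteq> j" by presburger
  moreover have "3 \<le> n" using \<open>\<not> n \<le> 2\<close> by simp
  ultimately obtain k where "k < n" "k \<noteq> i" "k \<noteq> j"
    by (meson less_le_trans)
  then obtain m where m: "m \<noteq> i" "m \<noteq> j" "{i, j, m} \<in> F"
    by (rule triple_mem_avoiding)
  have "m < n" using mem_subset [OF m(3)] by simp
  obtain m' where m': "m' \<noteq> i" "m' \<noteq> j" "m' \<noteq> m" "{i, j, m'} \<in> F"
    using \<open>m < n\<close> m(1,2) by (rule triple_mem_avoiding)
  have "{i, j} \<notin> F" using pair_not_mem [OF m(3) m'(4)] m m' by blast
  then have "{i, m} \<in> F" and "{j, m'} \<in> F"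
    using triple_mem_imp_pairs_mem m m' by blast+
  then have "card (sym_diff {i, m} {j, m'}) \<le> 3"
    by (rule card_sym_diff_le_3)
  moreover have "sym_diff {i, m} {j, m'} = {i, j, m, m'}"
    using m m' \<open>i \<noteq> j\<close> by auto
  ultimately show False
    using m m' \<open>i \<noteq> j\<close> by simp
qed

end

definition diff_coords :: "bool list \<Rightarrow> bool list \<Rightarrow> nat set" where
  "diff_coords w v = {i. i < length w \<and> w ! i \<noteq> v ! i}"

definition flip :: "bool list \<Rightarrow> nat set \<Rightarrow> bool list" where
  "flip w S = map (\<lambda>i. if i \<in> S then \<not> w ! i else w ! i) [0..<length w]"

lemma diff_coords_subset: "diff_coords w v \<subseteq> {..<length w}"
  by (auto simp: diff_coords_def)

lemma diff_coords_self [simp]: "diff_coords w w = {}"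
  by (simp add: diff_coords_def)

lemma length_flip [simp]: "length (flip w S) = length w"
  by (simp add: flip_def)

lemma diff_coords_flip: "S \<subseteq> {..<length w} \<Longrightarrow> diff_coords w (flip w S) = S"
  by (auto simp: diff_coords_def flip_def)

lemma hamming_eq_card_sym_diff:
  assumes "length u = length w" and "length v = length w"
  shows "hamming u v = card (sym_diff (diff_coords w u) (diff_coords w v))"
proof -
  have "{i. i < length u \<and> u ! i \<noteq> v ! i} = sym_diff (diff_coords w u) (diff_coords w v)"
    using assms by (auto simp: diff_coords_def)
  then show ?thesis by (simp add: hamming_def)
qed

lemma inj_on_diff_coords: "inj_on (diff_coords w) {v. length v = length w}"
proof (rule inj_onI)
  fix u v assume "u \<in> {v. length v = length w}" "v \<in> {v. length v = length w}"
    and "diff_coords w u = diff_coords w v"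
  then show "u = v"
    by (intro nth_equalityI) (auto simp: diff_coords_def set_eq_iff)
qed

lemma card_nbhd_inter_eq:
  assumes "\<sigma> \<subseteq> cube_vertices n" and "length w = n" and "v \<in> \<sigma>"
  shows "card (nbhd n v \<inter> \<sigma>) =
    card {T \<in> diff_coords w ` \<sigma>. card (sym_diff (diff_coords w v) T) = 1}"
proof -
  have "inj_on (diff_coords w) (nbhd n v \<inter> \<sigma>)"
    by (rule inj_on_subset [OF inj_on_diff_coords]) (auto simp: nbhd_def cube_vertices_def assms(2))
  moreover have "hamming v u = card (sym_diff (diff_coords w v) (diff_coords w u))" if "u \<in> \<sigma>" for u
    using assms that by (intro hamming_eq_card_sym_diff) (auto simp: cube_vertices_def)
  then have "nbhd n v \<inter> \<sigma> = {u \<in> \<sigma>. card (sym_diff (diff_coords w v) (diff_coords w u)) = 1}"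
    using assms(1) by (auto simp: nbhd_def)
  then have "diff_coords w ` (nbhd n v \<inter> \<sigma>) =
      {T \<in> diff_coords w ` \<sigma>. card (sym_diff (diff_coords w v) T) = 1}"
    by blast
  ultimately show ?thesis by (metis card_image)
qed

lemma maximal_diam_3_family_diff_coords_image:
  assumes "is_maximal_simplex n \<sigma>" and "w \<in> \<sigma>"
  shows "maximal_diam_3_family n (diff_coords w ` \<sigma>)"
proof
  have simplex: "is_simplex n \<sigma>" and maximal: "\<And>\<tau>. is_simplex n \<tau> \<Longrightarrow> \<sigma> \<subseteq> \<tau> \<Longrightarrow> \<tau> = \<sigma>"
    using assms(1) by (auto simp: is_maximal_simplex_def)
  then have length_mem: "\<And>v. v \<in> \<sigma> \<Longrightarrow> length v = n"
    by (auto simp: is_simplex_def cube_vertices_def)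
  have "length w = n" using length_mem assms(2) .
  have card_eq: "hamming u v = card (sym_diff (diff_coords w u) (diff_coords w v))"
    if "length u = n" and "length v = n" for u v
    using hamming_eq_card_sym_diff that \<open>length w = n\<close> by simp
  show "{} \<in> diff_coords w ` \<sigma>"
    using assms(2) by (metis diff_coords_self image_eqI)
  show "S \<subseteq> {..<n}" if "S \<in> diff_coords w ` \<sigma>" for S
    using that diff_coords_subset \<open>length w = n\<close> by blast
  show "card (sym_diff S T) \<le> 3" if "S \<in> diff_coords w ` \<sigma>" and "T \<in> diff_coords w ` \<sigma>" for S T
    using that simplex card_eq length_mem by (auto simp: is_simplex_def)
  fix S assume "S \<subseteq> {..<n}" and close: "\<And>T. T \<in> diff_coords w ` \<sigma> \<Longrightarrow> card (sym_diff S T) \<le> 3"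
  let ?x = "flip w S"
  have "diff_coords w ?x = S" using \<open>S \<subseteq> {..<n}\<close> \<open>length w = n\<close> by (simp add: diff_coords_flip)
  have "hamming ?x v \<le> 3" and "hamming v ?x \<le> 3" if "v \<in> \<sigma>" for v
    using close [of "diff_coords w v"] card_eq [of ?x v] card_eq [of v ?x] that length_mem
      \<open>diff_coords w ?x = S\<close> \<open>length w = n\<close> by (simp_all add: Un_commute)
  then have "is_simplex n (insert ?x \<sigma>)"
    using simplex \<open>length w = n\<close> by (auto simp: is_simplex_def cube_vertices_def hamming_def)
  then have "?x \<in> \<sigma>" using maximal by blast
  with \<open>diff_coords w ?x = S\<close> show "S \<in> diff_coords w ` \<sigma>" by blast
qed

theorem mainTheorem9:
  fixes n :: nat and \<sigma> :: "bool list set"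
  assumes "n \<ge> 5"
    and "is_maximal_simplex n \<sigma>"
    and "\<forall>w\<in>\<sigma>. card (nbhd n w \<inter> \<sigma>) \<ge> 2"
  shows "\<exists>v\<in>\<sigma>. card (nbhd n v \<inter> \<sigma>) \<ge> 3"
proof (rule ccontr)
  assume "\<not> ?thesis"
  with assms(3) have degree_2: "card (nbhd n v \<inter> \<sigma>) = 2" if "v \<in> \<sigma>" for v
    using that by force
  from assms(2) have "\<sigma> \<subseteq> cube_vertices n" and "\<sigma> \<noteq> {}"
    by (auto simp: is_maximal_simplex_def is_simplex_def)
  then obtain w where "w \<in> \<sigma>" and "length w = n"
    by (auto simp: cube_vertices_def)
  interpret maximal_diam_3_family n "diff_coords w ` \<sigma>"
    using maximal_diam_3_family_diff_coords_image [OF assms(2) \<open>w \<in> \<sigma>\<close>] .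
  interpret two_regular_diam_3_family n "diff_coords w ` \<sigma>"
    using card_nbhd_inter_eq [OF \<open>\<sigma> \<subseteq> cube_vertices n\<close> \<open>length w = n\<close>] degree_2
    by unfold_locales auto
  show False
    using dimension_le_2 assms(1) by simp
qed

end
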